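(* Let $n_1,n_2$ be distinct primes and let $k>1$ be an integer with $\gcd(k,n_1)=\gcd(k,n_2)=1$, and suppose $n=n_1n_2$ is a pseudoprime of basis $k$. Then for all $r,s,q,p\in\mathbb{N}$, $$\frac{k^{\,r n_1^{q}+s n_2^{p}-(r+s)}-1}{n}\in\mathbb{N}.$$
   Context: A positive integer $n$ is called a pseudoprime of basis $k$ (where $k>1$ is an integer) if $n$ is an odd composite number, $\gcd(n,k)=1$, and $k^{n-1}\equiv 1 \pmod n$. $\mathbb{N}$ denotes the positive integers. *)

theory Defs
  imports "HOL-Computational_Algebra.Primes" "HOL-Number_Theory.Cong"
begin

definition pseudoprime :: "nat \<Rightarrow> nat \<Rightarrow> bool" where
  "pseudoprime k n \<longleftrightarrow> odd n \<and> n > 1 \<and> \<not> prime n \<and> coprime n k \<and> [k ^ (n - 1) = 1] (mod n)"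

end

theory Submission
  imports Defs "HOL-Number_Theory.Number_Theory"
begin

text \<open>Write \<open>n = a b\<close> with \<open>a, b\<close> distinct primes and let \<open>d\<close> be the order of \<open>k\<close> modulo \<open>a\<close>.
  By Fermat \<open>d\<close> divides \<open>a - 1\<close>, and since \<open>a b - 1 = b (a - 1) + (b - 1)\<close> the pseudoprime
  condition makes \<open>d\<close> divide \<open>b - 1\<close> as well. As \<open>x - 1\<close> divides \<open>x\<^sup>i - 1\<close>, \<open>d\<close> divides every
  exponent \<open>r (a\<^sup>q - 1) + s (b\<^sup>p - 1)\<close>; by symmetry the same holds modulo \<open>b\<close>, and the
  Chinese remainder theorem gives the congruence modulo \<open>n\<close>.\<close>

lemma pred_dvd_power_pred: "a - 1 dvd a ^ q - 1" for a q :: nat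
proof (cases "a = 0")
  case False
  then have "[a = 1] (mod a - 1)"
    by (simp add: cong_altdef_nat)
  then have "[a ^ q = 1] (mod a - 1)"
    using cong_pow by fastforce
  then show ?thesis
    by (rule cong_to_1_nat)
qed (simp add: power_0_left)

lemma ord_dvd_pred_of_prime:
  fixes a k :: nat
  assumes "prime a" and "coprime k a"
  shows "ord a k dvd a - 1"
  using euler_theorem[OF assms(2)] by (simp add: ord_divides' totient_prime[OF assms(1)])

lemma ord_dvd_cofactor_pred:
  fixes a b k :: nat
  assumes "prime a" and "coprime k a" and "b \<ge> 1"
    and "[k ^ (a * b - 1) = 1] (mod a)"
  shows "ord a k dvd b - 1"
proof -
  have "a * b - 1 = b * (a - 1) + (b - 1)"
    using assms(3) prime_ge_1_nat[OF assms(1)] by (simp add: algebra_simps)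
  moreover have "ord a k dvd b * (a - 1)"
    using ord_dvd_pred_of_prime[OF assms(1,2)] by simp
  moreover have "ord a k dvd a * b - 1"
    using assms(4) by (simp add: ord_divides')
  ultimately show ?thesis
    by (simp add: dvd_add_right_iff)
qed

lemma cong_power_one_of_prime_factor:
  fixes a b k x y i j :: nat
  assumes "prime a" and "coprime k a" and "b \<ge> 1"
    and "[k ^ (a * b - 1) = 1] (mod a)"
  shows "[k ^ (x * (a ^ i - 1) + y * (b ^ j - 1)) = 1] (mod a)"
proof -
  have "ord a k dvd a ^ i - 1"
    using ord_dvd_pred_of_prime[OF assms(1,2)] pred_dvd_power_pred dvd_trans by blast
  moreover have "ord a k dvd b ^ j - 1"
    using ord_dvd_cofactor_pred[OF assms] pred_dvd_power_pred dvd_trans by blast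
  ultimately show ?thesis
    by (simp add: ord_divides')
qed

lemma cong_power_one_of_pseudoprime_semiprime:
  fixes a b k x y i j :: nat
  assumes "prime a" and "prime b" and "a \<noteq> b"
    and "coprime k a" and "coprime k b"
    and "[k ^ (a * b - 1) = 1] (mod a * b)"
  shows "[k ^ (x * (a ^ i - 1) + y * (b ^ j - 1)) = 1] (mod a * b)"
proof (rule coprime_cong_mult_nat)
  have "b \<ge> 1" "a \<ge> 1"
    using assms(1,2) prime_ge_1_nat by blast+
  show "[k ^ (x * (a ^ i - 1) + y * (b ^ j - 1)) = 1] (mod a)"
    using assms(6) \<open>b \<ge> 1\<close>
    by (intro cong_power_one_of_prime_factor assms(1,4)) (auto intro: cong_dvd_modulus_nat)
  have "[k ^ (b * a - 1) = 1] (mod b)"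
    using assms(6) by (auto simp: mult.commute intro: cong_dvd_modulus_nat)
  then have "[k ^ (y * (b ^ j - 1) + x * (a ^ i - 1)) = 1] (mod b)"
    using \<open>a \<ge> 1\<close> by (intro cong_power_one_of_prime_factor assms(2,5))
  then show "[k ^ (x * (a ^ i - 1) + y * (b ^ j - 1)) = 1] (mod b)"
    by (simp add: add.commute)
  show "coprime a b"
    using assms(1-3) by (simp add: primes_coprime)
qed

theorem mainTheorem3:
  fixes n1 n2 k r s q p :: nat
  assumes "prime n1" and "prime n2" and "n1 \<noteq> n2"
    and "k > 1" and "coprime k n1" and "coprime k n2"
    and "pseudoprime k (n1 * n2)"
    and "r \<ge> 1" and "s \<ge> 1" and "q \<ge> 1" and "p \<ge> 1"
  shows "\<exists>m::int. m \<ge> 1 \<and>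
           int k ^ (r * n1 ^ q + s * n2 ^ p - (r + s)) - 1 = int (n1 * n2) * m"
proof -
  define e where "e = r * n1 ^ q + s * n2 ^ p - (r + s)"
  have "n1 ^ q \<ge> 2"
    using power_increasing[of 1 q n1] prime_ge_2_nat[OF assms(1)] assms(10) by simp
  moreover have "n2 ^ p \<ge> 1"
    using prime_ge_1_nat[OF assms(2)] by simp
  ultimately have "r \<le> r * n1 ^ q" "s \<le> s * n2 ^ p"
    by simp_all
  then have e_eq: "e = r * (n1 ^ q - 1) + s * (n2 ^ p - 1)"
    unfolding e_def diff_mult_distrib2 by simp
  have "r * 1 \<le> r * (n1 ^ q - 1)"
    using \<open>n1 ^ q \<ge> 2\<close> by (intro mult_le_mono2) simp
  then have "e > 0"
    unfolding e_eq using assms(8) by linarith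
  have "[k ^ e = 1] (mod n1 * n2)"
    unfolding e_eq using assms(1-3,5,6,7)
    by (intro cong_power_one_of_pseudoprime_semiprime) (auto simp: pseudoprime_def)
  then obtain m where m: "k ^ e - 1 = n1 * n2 * m"
    using cong_to_1_nat by blast
  have "k ^ e > 1"
    using one_less_power[OF assms(4) \<open>e > 0\<close>] .
  then have "int k ^ e - 1 = int (n1 * n2) * int m"
    using m by (metis of_nat_1 of_nat_diff of_nat_mult of_nat_power less_imp_le)
  moreover have "m \<noteq> 0"
    using m \<open>k ^ e > 1\<close> by (metis mult_0_right zero_less_diff less_irrefl)
  ultimately show ?thesis
    unfolding e_def by (intro exI[of _ "int m"]) auto
qed

end
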